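(* For all integers $n\ge 0$ and $k\ge 1$, $$(k+1)(n+1-k)\,b_n^{(k-1)}=\left(k(k+1)-n-1\right)b_n^{(k)}+k(n+k+2)\,b_n^{(k+1)}.$$
   Context: Let $X(\theta)=1+2\cos\theta$ and, for $k\ge 0$, $\chi_k(\theta)=1+2\sum_{j=1}^{k}\cos(j\theta)$ (the character of the $(k+1)$-dimensional irreducible representation of the Lie algebra $A_1$). For $n\ge 0$ the integers $b_n^{(k)}$, $0\le k\le n$, are the unique coefficients with $X(\theta)^n=\sum_{k=0}^{n}b_n^{(k)}\chi_k(\theta)$ for all real $\theta$; set $b_n^{(k)}=0$ for $k>n$. *)

theory Defs
  imports Complex_Main
begin

definition X :: "real \<Rightarrow> real" where
  "X \<theta> = 1 + 2 * cos \<theta>"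

definition chi :: "nat \<Rightarrow> real \<Rightarrow> real" where
  "chi k \<theta> = 1 + 2 * (\<Sum>j=1..k. cos (real j * \<theta>))"

definition bcoef :: "nat \<Rightarrow> nat \<Rightarrow> int" where
  "bcoef n = (THE c :: nat \<Rightarrow> int. (\<forall>k>n. c k = 0) \<and>
      (\<forall>\<theta>::real. X \<theta> ^ n = (\<Sum>k\<le>n. of_int (c k) * chi k \<theta>)))"

end

(* Since 2 cos t cos (j t) = cos ((j+1) t) + cos ((j-1) t), multiplication by X acts on characters
   by X chi_k = chi_(k-1) + chi_k + chi_(k+1) (and X chi_0 = chi_1), so
   b_(n+1)^(k) = b_n^(k-1) + b_n^(k) + b_n^(k+1).  The characters are linearly independent, since
   chi_k - chi_(k-1) = 2 cos (k theta), so this recursion determines the b_n^(k).  Substituting it,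
   k (k+1) times the defect of the three-term relation at n+1 is a linear combination of the defects
   at n; the defects vanish for n = 0, hence for all n. *)
theory Submission
  imports Defs
begin

lemma chi_Suc: "chi (Suc k) t = chi k t + 2 * cos (real (Suc k) * t)"
  by (simp add: chi_def algebra_simps)

lemma chi_eq_sum_cos: "chi k t = (\<Sum>j\<le>k. (if j = 0 then 1 else 2) * cos (real j * t))"
  by (induction k) (simp_all add: chi_def chi_Suc)

lemma two_cos_mult_chi:
  "2 * cos t * chi (Suc k) t = chi k t + chi (Suc (Suc k)) t"
proof (induction k)
  case 0
  have "cos (2 * t) = 2 * (cos t)\<^sup>2 - 1"
    by (rule cos_double_cos)
  then show ?case by (simp add: chi_def power2_eq_square algebra_simps)
next
  case (Suc k)
  have "2 * cos t * cos (real (Suc (Suc k)) * t)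
      = cos (real (Suc (Suc (Suc k))) * t) + cos (real (Suc k) * t)"
    using cos_add[of "real (Suc (Suc k)) * t" t] cos_diff[of "real (Suc (Suc k)) * t" t]
    by (simp add: algebra_simps)
  with Suc show ?case
    by (simp add: chi_Suc algebra_simps)
qed

lemma X_mult_chi_0: "X t * chi 0 t = chi 1 t"
  by (simp add: X_def chi_def)

lemma X_mult_chi_Suc: "X t * chi (Suc k) t = chi k t + chi (Suc k) t + chi (Suc (Suc k)) t"
  using two_cos_mult_chi[of t k] by (simp add: X_def algebra_simps)

definition mult_X_coeffs :: "(nat \<Rightarrow> 'a::semiring_1) \<Rightarrow> nat \<Rightarrow> 'a" where
  "mult_X_coeffs b k = (case k of 0 \<Rightarrow> b 1 | Suc j \<Rightarrow> b j + b (Suc j) + b (Suc (Suc j)))"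

lemma of_int_mult_X_coeffs:
  "of_int (mult_X_coeffs b k) = mult_X_coeffs (\<lambda>j. of_int (b j)) k"
  by (simp add: mult_X_coeffs_def split: nat.split)

lemma sum_mult_X_coeffs_chi:
  fixes b :: "nat \<Rightarrow> real"
  shows "(\<Sum>j\<le>Suc m. mult_X_coeffs b j * chi j t)
     = X t * (\<Sum>k\<le>m. b k * chi k t)
       + b (Suc m) * (chi m t + chi (Suc m) t) + b (Suc (Suc m)) * chi (Suc m) t"
proof (induction m)
  case 0
  show ?case using X_mult_chi_0[of t] by (simp add: mult_X_coeffs_def chi_def X_def algebra_simps)
next
  case (Suc m)
  have "mult_X_coeffs b (Suc (Suc m)) = b (Suc m) + b (Suc (Suc m)) + b (Suc (Suc (Suc m)))"
    by (simp add: mult_X_coeffs_def)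
  moreover have "X t * (b (Suc m) * chi (Suc m) t)
      = b (Suc m) * (chi m t + chi (Suc m) t + chi (Suc (Suc m)) t)"
    by (simp add: X_mult_chi_Suc[symmetric])
  ultimately show ?case
    using Suc by (simp add: algebra_simps)
qed

lemma X_mult_sum_chi:
  fixes b :: "nat \<Rightarrow> real"
  assumes "\<And>k. k > n \<Longrightarrow> b k = 0"
  shows "X t * (\<Sum>k\<le>n. b k * chi k t) = (\<Sum>k\<le>Suc n. mult_X_coeffs b k * chi k t)"
  using sum_mult_X_coeffs_chi[where b = b and m = n and t = t] assms[of "Suc n"] assms[of "Suc (Suc n)"]
  by simp

fun bcoef_rec :: "nat \<Rightarrow> nat \<Rightarrow> int" where
  "bcoef_rec 0 k = (if k = 0 then 1 else 0)"
| "bcoef_rec (Suc n) 0 = bcoef_rec n 1"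
| "bcoef_rec (Suc n) (Suc k) = bcoef_rec n k + bcoef_rec n (Suc k) + bcoef_rec n (Suc (Suc k))"

lemma bcoef_rec_Suc: "bcoef_rec (Suc n) = mult_X_coeffs (bcoef_rec n)"
  by (rule ext) (simp add: mult_X_coeffs_def split: nat.split)

lemma bcoef_rec_eq_0: "k > n \<Longrightarrow> bcoef_rec n k = 0"
proof (induction n arbitrary: k)
  case (Suc n)
  then show ?case by (cases k) auto
qed simp

lemma power_X_eq_sum_chi: "X t ^ n = (\<Sum>k\<le>n. of_int (bcoef_rec n k) * chi k t)"
proof (induction n)
  case 0
  show ?case by (simp add: chi_def)
next
  case (Suc n)
  have "X t ^ Suc n = X t * (\<Sum>k\<le>n. of_int (bcoef_rec n k) * chi k t)"
    using Suc by simp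
  also have "\<dots> = (\<Sum>k\<le>Suc n. mult_X_coeffs (\<lambda>j. of_int (bcoef_rec n j)) k * chi k t)"
    by (rule X_mult_sum_chi) (simp add: bcoef_rec_eq_0)
  finally show ?case by (simp add: bcoef_rec_Suc of_int_mult_X_coeffs)
qed

lemma sum_chi_eq_sum_cos:
  "(\<Sum>k\<le>n. c k * chi k t)
     = (\<Sum>j\<le>n. (if j = 0 then 1 else 2) * (\<Sum>k=j..n. c k) * cos (real j * t))"
proof (induction n)
  case 0
  show ?case by (simp add: chi_def)
next
  case (Suc n)
  let ?e = "\<lambda>j::nat. if j = 0 then 1 else (2::real)"
  have "(\<Sum>j\<le>Suc n. ?e j * (\<Sum>k=j..Suc n. c k) * cos (real j * t))
      = (\<Sum>j\<le>Suc n. ?e j * (\<Sum>k=j..n. c k) * cos (real j * t))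
        + c (Suc n) * (\<Sum>j\<le>Suc n. ?e j * cos (real j * t))"
    by (simp add: sum.cl_ivl_Suc sum_distrib_left sum.distrib[symmetric] algebra_simps
             del: sum.atMost_Suc)
  also have "\<dots> = (\<Sum>k\<le>n. c k * chi k t) + c (Suc n) * chi (Suc n) t"
    using Suc by (simp add: chi_eq_sum_cos[of "Suc n"])
  finally show ?case
    by simp
qed

lemma vanishing_function_has_derivative_0:
  assumes "\<And>x. (h has_real_derivative h' x) (at x)" and "\<And>x. h x = 0"
  shows "h' x = 0"
proof -
  have "((\<lambda>_. 0) has_real_derivative h' x) (at x)"
    using assms by (metis ext)
  then show ?thesis
    using DERIV_const DERIV_unique by blast
qed

text \<open>The second derivative multiplies the j-th term by -j^2, so adding (n+1)^2 times the sum
  to it removes the top term and leaves an identity of lower degree.\<close>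
lemma cos_multiples_independent:
  assumes "\<And>t. (\<Sum>j\<le>n. d j * cos (real j * t)) = (0::real)"
  shows "\<forall>j\<le>n. d j = 0"
  using assms
proof (induction n arbitrary: d)
  case 0
  then show ?case by auto
next
  case (Suc n)
  let ?f = "\<lambda>t. \<Sum>j\<le>Suc n. d j * cos (real j * t)"
  let ?f1 = "\<lambda>t. \<Sum>j\<le>Suc n. - d j * real j * sin (real j * t)"
  let ?f2 = "\<lambda>t. \<Sum>j\<le>Suc n. - d j * real j * real j * cos (real j * t)"
  have "(?f has_real_derivative ?f1 x) (at x)" for x
    by (intro DERIV_sum) (auto intro!: derivative_eq_intros simp: algebra_simps)
  then have f1: "?f1 x = 0" for x
    by (rule vanishing_function_has_derivative_0) (rule Suc.prems)
  have "(?f1 has_real_derivative ?f2 x) (at x)" for x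
    by (intro DERIV_sum) (auto intro!: derivative_eq_intros simp: algebra_simps)
  then have f2: "?f2 x = 0" for x
    by (rule vanishing_function_has_derivative_0) (rule f1)
  have "(\<Sum>j\<le>n. (d j * (real (Suc n)^2 - real j^2)) * cos (real j * t)) = 0" for t
  proof -
    have "(\<Sum>j\<le>n. (d j * (real (Suc n)^2 - real j^2)) * cos (real j * t))
        = real (Suc n)^2 * ?f t + ?f2 t"
      by (simp add: sum_distrib_left sum.distrib[symmetric] algebra_simps power2_eq_square)
    then show ?thesis
      using Suc.prems f2 by simp
  qed
  then have "\<forall>j\<le>n. d j * (real (Suc n)^2 - real j^2) = 0"
    by (rule Suc.IH)
  moreover have "real j^2 < real (Suc n)^2" if "j \<le> n" for j
    using that by (intro power_strict_mono) auto
  ultimately have low: "\<forall>j\<le>n. d j = 0"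
    by fastforce
  then have "?f 0 = d (Suc n)"
    by simp
  then have "d (Suc n) = 0"
    using Suc.prems[of 0] by simp
  with low show ?case
    using le_Suc_eq by auto
qed

lemma chi_independent:
  assumes "\<And>t. (\<Sum>k\<le>n. c k * chi k t) = 0"
  shows "\<forall>k\<le>n. c k = 0"
proof -
  have "\<forall>j\<le>n. (if j = 0 then 1 else 2) * (\<Sum>k=j..n. c k) = 0"
    by (rule cos_multiples_independent) (use assms sum_chi_eq_sum_cos in metis)
  then have tails: "(\<Sum>k=j..n. c k) = 0" for j
    by (cases "j \<le> n") (auto split: if_splits)
  show ?thesis
  proof (intro allI impI)
    fix k assume "k \<le> n"
    then have "(\<Sum>k=k..n. c k) = c k + (\<Sum>k=Suc k..n. c k)"
      by (rule sum.atLeast_Suc_atMost)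
    then show "c k = 0"
      using tails[of k] tails[of "Suc k"] by simp
  qed
qed

lemma bcoef_eq_bcoef_rec: "bcoef n = bcoef_rec n"
  unfolding bcoef_def
proof (rule the_equality)
  show "(\<forall>k>n. bcoef_rec n k = 0) \<and>
      (\<forall>t. X t ^ n = (\<Sum>k\<le>n. of_int (bcoef_rec n k) * chi k t))"
    using bcoef_rec_eq_0 power_X_eq_sum_chi by blast
next
  fix c :: "nat \<Rightarrow> int"
  assume c: "(\<forall>k>n. c k = 0) \<and> (\<forall>t. X t ^ n = (\<Sum>k\<le>n. of_int (c k) * chi k t))"
  have "(\<Sum>k\<le>n. of_int (c k - bcoef_rec n k) * chi k t) = 0" for t
    using c power_X_eq_sum_chi[of t n] by (simp add: algebra_simps sum_subtractf)
  then have "\<forall>k\<le>n. real_of_int (c k - bcoef_rec n k) = 0"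
    by (rule chi_independent)
  then show "c = bcoef_rec n"
    using c bcoef_rec_eq_0[of n] by (intro ext) (metis linorder_not_le of_int_0_eq_iff right_minus_eq)
qed

definition three_term_defect :: "nat \<Rightarrow> nat \<Rightarrow> int" where
  "three_term_defect n k =
     (int k + 1) * (int n + 1 - int k) * bcoef_rec n (k - 1)
     - (int k * (int k + 1) - int n - 1) * bcoef_rec n k
     - int k * (int n + int k + 2) * bcoef_rec n (k + 1)"

lemma three_term_defect_Suc_1:
  "2 * three_term_defect (Suc n) 1 = three_term_defect n 1 + three_term_defect n 2"
  by (simp add: three_term_defect_def algebra_simps numeral_eq_Suc)

lemma three_term_defect_Suc_Suc:
  "int (Suc (Suc k)) * int (Suc (Suc (Suc k))) * three_term_defect (Suc n) (Suc (Suc k))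
     = (int k + 3)^2 * three_term_defect n (Suc k)
       + ((int k + 2)^2 + int k + 1) * three_term_defect n (Suc (Suc k))
       + (int k + 2)^2 * three_term_defect n (Suc (Suc (Suc k)))"
  by (simp add: three_term_defect_def algebra_simps power2_eq_square)

lemma three_term_defect_eq_0: "k \<ge> 1 \<Longrightarrow> three_term_defect n k = 0"
proof (induction n arbitrary: k)
  case 0
  then show ?case by (simp add: three_term_defect_def)
next
  case (Suc n)
  consider "k = 1" | m where "k = Suc (Suc m)"
    using Suc.prems by (metis One_nat_def Suc_le_D le_antisym not0_implies_Suc)
  then show ?case
  proof cases
    case 1
    then show ?thesis
      using three_term_defect_Suc_1[of n] Suc.IH[of 1] Suc.IH[of 2] by simp
  next
    case (2 m)
    then show ?thesis
      using three_term_defect_Suc_Suc[of m n] Suc.IH[of "Suc m"] Suc.IH[of "Suc (Suc m)"]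
        Suc.IH[of "Suc (Suc (Suc m))"] by simp
  qed
qed

theorem theorem5:
  fixes n k :: nat
  assumes "k \<ge> 1"
  shows "(int k + 1) * (int n + 1 - int k) * bcoef n (k - 1)
       = (int k * (int k + 1) - int n - 1) * bcoef n k + int k * (int n + int k + 2) * bcoef n (k + 1)"
  using three_term_defect_eq_0[OF assms, of n]
  unfolding bcoef_eq_bcoef_rec three_term_defect_def by simp

end
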